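(* Let $R$ be as in the standing setup. If the $m$-adic filtration of $R$ satisfies the BF condition, then it is essentially divisible.
   Context: Standing setup: $k$ is a field and $R$ is a complete local domain with $k\subseteq R\subseteq k[[t]]$, residue field $k$, maximal ideal $m$, and nonzero conductor $(R:k[[t]])\neq 0$. Let $v$ be the $t$-adic valuation, $S=v(R)=\{v(r): r\in R, r\neq 0\}$, $e$ the smallest positive element of $S$, and $w_j$ the smallest element of $S$ congruent to $j\pmod e$ ($j=0,\dots,e-1$). For a nonzero ideal $I$, $v(I)=\{v(a): a\in I, a\ne0\}$; $m^0=R$. For $a\in R$, $\operatorname{ord}(a)=\max\{i: a\in m^i\}$; for $s\in S$, $\operatorname{vord}(s)=\max\{i: s\in v(m^i)\}$. A minimal reduction of $m$ is $xR$ with $v(x)=e$. The $m$-adic filtration is essentially divisible with respect to $xR$ if for every $u\in v(xR)$ there is $a\in xR$ with $v(a)=u$ and $\operatorname{ord}(a)=\operatorname{vord}(u)$; it is essentially divisible if this holds for some $x$ with $v(x)=e$. The $m$-adic filtration satisfies the BF condition if there exist $x\in R$ with $v(x)=e$ and $f_0,\ldots,f_{e-1}\in R$ with $v(f_j)=w_j$ such that for every $i\ge0$, $m^i$ is a free $k[[x]]$-module with a basis of the form $x^{h_0}f_0,\ldots,x^{h_{e-1}}f_{e-1}$ for some nonnegative integers $h_j$ (depending on $i$). *)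

theory Defs
  imports "HOL-Computational_Algebra.Formal_Power_Series"
begin

text \<open>Setting: k is the field type 'a, k[[t]] is the type 'a fps, R is a set of power series.
  The t-adic valuation v is subdegree.\<close>

definition subring_containing_k :: "'a::field fps set \<Rightarrow> bool" where
  "subring_containing_k R \<longleftrightarrow> (\<forall>c. fps_const c \<in> R) \<and>
     (\<forall>a\<in>R. \<forall>b\<in>R. a + b \<in> R \<and> a - b \<in> R \<and> a * b \<in> R)"

definition maxid :: "'a::field fps set \<Rightarrow> 'a fps set" where
  "maxid R = {r \<in> R. fps_nth r 0 = 0}"

inductive_set addclose :: "'a::field fps set \<Rightarrow> 'a fps set" for A where
  zero: "0 \<in> addclose A"
| base: "a \<in> A \<Longrightarrow> a \<in> addclose A"
| add: "a \<in> addclose A \<Longrightarrow> b \<in> addclose A \<Longrightarrow> a + b \<in> addclose A"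

fun mpow :: "'a::field fps set \<Rightarrow> nat \<Rightarrow> 'a fps set" where
  "mpow R 0 = R"
| "mpow R (Suc i) = addclose {a * b | a b. a \<in> mpow R i \<and> b \<in> maxid R}"

definition local_with_maxid :: "'a::field fps set \<Rightarrow> bool" where
  "local_with_maxid R \<longleftrightarrow> (\<forall>r\<in>R. fps_nth r 0 \<noteq> 0 \<longrightarrow> inverse r \<in> R)"

definition madic_complete :: "'a::field fps set \<Rightarrow> bool" where
  "madic_complete R \<longleftrightarrow> (\<forall>a :: nat \<Rightarrow> 'a fps. (\<forall>n. a n \<in> R) \<and> (\<forall>n. a (Suc n) - a n \<in> mpow R n)
       \<longrightarrow> (\<exists>l\<in>R. \<forall>n. l - a n \<in> mpow R n))"

definition conductor :: "'a::field fps set \<Rightarrow> 'a fps set" where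
  "conductor R = {z. \<forall>y. z * y \<in> R}"

definition vset :: "'a::field fps set \<Rightarrow> nat set" where
  "vset I = {subdegree a | a. a \<in> I \<and> a \<noteq> 0}"

definition semigroup_S :: "'a::field fps set \<Rightarrow> nat set" where
  "semigroup_S R = vset R"

definition mult_e :: "'a::field fps set \<Rightarrow> nat" where
  "mult_e R = (LEAST s. s \<in> semigroup_S R \<and> 0 < s)"

definition apery_w :: "'a::field fps set \<Rightarrow> nat \<Rightarrow> nat" where
  "apery_w R j = (LEAST s. s \<in> semigroup_S R \<and> s mod mult_e R = j)"

definition ord_m :: "'a::field fps set \<Rightarrow> 'a fps \<Rightarrow> nat" where
  "ord_m R a = (GREATEST i. a \<in> mpow R i)"

definition vord :: "'a::field fps set \<Rightarrow> nat \<Rightarrow> nat" where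
  "vord R s = (GREATEST i. s \<in> vset (mpow R i))"

definition principal :: "'a::field fps set \<Rightarrow> 'a fps \<Rightarrow> 'a fps set" where
  "principal R x = {x * r | r. r \<in> R}"

definition ess_div_wrt :: "'a::field fps set \<Rightarrow> 'a fps \<Rightarrow> bool" where
  "ess_div_wrt R x \<longleftrightarrow> (\<forall>u \<in> vset (principal R x).
      \<exists>a \<in> principal R x. a \<noteq> 0 \<and> subdegree a = u \<and> ord_m R a = vord R u)"

definition ess_div :: "'a::field fps set \<Rightarrow> bool" where
  "ess_div R \<longleftrightarrow> (\<exists>x\<in>R. x \<noteq> 0 \<and> subdegree x = mult_e R \<and> ess_div_wrt R x)"

text \<open>k[[x]]-linear combination  sum_j g_j(x) * b_j  (g_j(x) = g_j oo x).\<close>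
definition kx_comb :: "'a::field fps \<Rightarrow> nat \<Rightarrow> (nat \<Rightarrow> 'a fps) \<Rightarrow> (nat \<Rightarrow> 'a fps) \<Rightarrow> 'a fps" where
  "kx_comb x n b g = (\<Sum>j<n. (g j oo x) * b j)"

definition free_kx_basis :: "'a::field fps \<Rightarrow> nat \<Rightarrow> 'a fps set \<Rightarrow> (nat \<Rightarrow> 'a fps) \<Rightarrow> bool" where
  "free_kx_basis x n M b \<longleftrightarrow>
     M = {kx_comb x n b g | g. True} \<and>
     (\<forall>g. kx_comb x n b g = 0 \<longrightarrow> (\<forall>j<n. g j = 0))"

definition BF_condition :: "'a::field fps set \<Rightarrow> bool" where
  "BF_condition R \<longleftrightarrow> (\<exists>x\<in>R. x \<noteq> 0 \<and> subdegree x = mult_e R \<and>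
     (\<exists>f :: nat \<Rightarrow> 'a fps. (\<forall>j<mult_e R. f j \<in> R \<and> f j \<noteq> 0 \<and> subdegree (f j) = apery_w R j) \<and>
        (\<forall>i. \<exists>h :: nat \<Rightarrow> nat. free_kx_basis x (mult_e R) (mpow R i) (\<lambda>j. x ^ h j * f j))))"

end

theory Submission
  imports Defs
begin

(*
  Fix the data of the BF condition: x with v(x) = e and f_0,...,f_(e-1) with v(f_j) = w_j
  such that every m^i is spanned over k[[x]] by x^(h_ij) f_j.  Since v(g(x) x^h f_j) =
  e (ord g + h) + w_j and w_j = j (mod e), the terms of such a combination have pairwise
  different valuations, so the valuation of any nonzero b in m^i is the valuation of a
  single term (g(x) x^h f_J), which again lies in m^i.  For i = 0 this forces h_0J = 0, so
  R contains k[[x]] f_J.  Now let u in v(xR) and i = vord(u); pick b in m^i with v(b) = u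
  and its leading term a in m^i.  Since u - e is in S and congruent to J, w_J < u, so a has
  a factor x with cofactor in k[[x]] f_J, i.e. a is in xR; and ord(a) = i because a lying
  in m^(i+1) would contradict the maximality of i.
*)

section \<open>Power series facts\<close>

lemma subdegree_compose_mult:
  fixes q x B :: "'a::field fps"
  assumes "fps_nth x 0 = 0" "x \<noteq> 0" "q \<noteq> 0" "B \<noteq> 0"
  shows "(q oo x) * B \<noteq> 0"
    and "subdegree ((q oo x) * B) = subdegree x * subdegree q + subdegree B"
proof -
  have "q oo x \<noteq> 0" using fps_compose_eq_0_iff[OF assms(1)] assms(2,3) by auto
  then show "(q oo x) * B \<noteq> 0" "subdegree ((q oo x) * B) = subdegree x * subdegree q + subdegree B"
    using assms by (simp_all add: subdegree_fps_compose[OF assms(1)])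
qed

lemma subdegree_sum_distinct:
  fixes T :: "nat \<Rightarrow> 'a::field fps"
  assumes distinct: "\<And>i j. i < n \<Longrightarrow> j < n \<Longrightarrow> T i \<noteq> 0 \<Longrightarrow> T j \<noteq> 0 \<Longrightarrow>
      subdegree (T i) = subdegree (T j) \<Longrightarrow> i = j"
    and nz: "(\<Sum>j<n. T j) \<noteq> 0"
  obtains J where "J < n" "T J \<noteq> 0" "subdegree (\<Sum>j<n. T j) = subdegree (T J)"
proof -
  have "\<exists>j. j < n \<and> T j \<noteq> 0"
  proof (rule ccontr)
    assume "\<not> ?thesis"
    then have "(\<Sum>j<n. T j) = 0" by (intro sum.neutral) auto
    with nz show False by simp
  qed
  then obtain J where J: "J < n" "T J \<noteq> 0"
    and least: "\<And>j. j < n \<Longrightarrow> T j \<noteq> 0 \<Longrightarrow> subdegree (T J) \<le> subdegree (T j)"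
    using ex_has_least_nat[of "\<lambda>j. j < n \<and> T j \<noteq> 0" _ "\<lambda>j. subdegree (T j)"] by blast
  define d where "d = subdegree (T J)"
  have below: "fps_nth (T j) k = 0" if "j < n" "k < d" for j k
  proof (cases "T j = 0")
    case False
    then show ?thesis using least[OF that(1) False] that(2) unfolding d_def
      by (intro nth_less_subdegree_zero) simp
  qed simp
  have other: "fps_nth (T j) d = 0" if "j < n" "j \<noteq> J" for j
  proof (cases "T j = 0")
    case False
    then have "d < subdegree (T j)"
      using least[OF that(1)] distinct[OF J(1) that(1) J(2)] that(2) unfolding d_def by force
    then show ?thesis by (rule nth_less_subdegree_zero)
  qed simp
  have "fps_nth (\<Sum>j<n. T j) d = fps_nth (T J) d + (\<Sum>j\<in>{..<n} - {J}. fps_nth (T j) d)"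
    using J(1) by (simp add: fps_sum_nth sum.remove)
  also have "\<dots> = fps_nth (T J) d" using other by (simp add: sum.neutral)
  finally have "fps_nth (\<Sum>j<n. T j) d \<noteq> 0" using J(2) unfolding d_def by simp
  moreover have "fps_nth (\<Sum>j<n. T j) k = 0" if "k < d" for k
    using below that by (simp add: fps_sum_nth)
  ultimately have "subdegree (\<Sum>j<n. T j) = d" by (rule subdegreeI)
  with J that show thesis unfolding d_def by blast
qed

lemma compose_times_power_factor:
  fixes g x :: "'a::field fps"
  assumes x0: "fps_nth x 0 = 0" and "g \<noteq> 0" "0 < subdegree g + h"
  shows "(g oo x) * x ^ h = x * (fps_shift 1 (g * fps_X ^ h) oo x)"
proof -
  define G where "G = g * fps_X ^ h"
  have "subdegree G = subdegree g + h" using assms(2) unfolding G_def by simp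
  then have "1 \<le> subdegree G" using assms(3) by linarith
  then have "fps_shift 1 G * fps_X = G" by (rule fps_shift_times_fps_X)
  then have "G oo x = (fps_shift 1 G oo x) * (fps_X oo x)"
    using fps_compose_mult_distrib[OF x0, of "fps_shift 1 G" fps_X] by simp
  also have "\<dots> = x * (fps_shift 1 G oo x)" using x0 by (simp add: mult.commute)
  finally have "G oo x = x * (fps_shift 1 G oo x)" .
  moreover have "G oo x = (g oo x) * x ^ h"
    using x0 unfolding G_def by (simp add: fps_compose_mult_distrib fps_compose_power[symmetric])
  ultimately show ?thesis unfolding G_def by simp
qed

section \<open>k[[x]]-spans\<close>

lemma kx_comb_single:
  assumes "J < n"
  shows "(q oo x) * B J \<in> {kx_comb x n B g | g. True}"
proof -
  have "kx_comb x n B (\<lambda>j. if j = J then q else 0) = (\<Sum>j<n. if j = J then (q oo x) * B J else 0)"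
    unfolding kx_comb_def by (intro sum.cong) auto
  also have "\<dots> = (q oo x) * B J" using assms by simp
  finally show ?thesis by (intro CollectI exI[of _ "\<lambda>j. if j = J then q else 0"]) simp
qed

lemma kx_span_leading_term:
  fixes x :: "'a::field fps"
  assumes span: "M = {kx_comb x n B g | g. True}"
    and x0: "fps_nth x 0 = 0" and xnz: "x \<noteq> 0"
    and Bnz: "\<And>j. j < n \<Longrightarrow> B j \<noteq> 0"
    and incongruent: "\<And>i j. i < n \<Longrightarrow> j < n \<Longrightarrow>
      subdegree (B i) mod subdegree x = subdegree (B j) mod subdegree x \<Longrightarrow> i = j"
    and b: "b \<in> M" "b \<noteq> 0"
  obtains J q where "J < n" "q \<noteq> 0" "(q oo x) * B J \<in> M"
    "subdegree b = subdegree x * subdegree q + subdegree (B J)"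
proof -
  from b(1) obtain g where bg: "b = (\<Sum>j<n. (g j oo x) * B j)"
    unfolding span kx_comb_def by blast
  define T where "T j = (g j oo x) * B j" for j
  have T_sub: "g j \<noteq> 0 \<and> subdegree (T j) = subdegree x * subdegree (g j) + subdegree (B j)"
    if "j < n" "T j \<noteq> 0" for j
  proof
    show "g j \<noteq> 0" using that(2) unfolding T_def by auto
    then show "subdegree (T j) = subdegree x * subdegree (g j) + subdegree (B j)"
      unfolding T_def by (rule subdegree_compose_mult(2)[OF x0 xnz _ Bnz[OF that(1)]])
  qed
  have T_mod: "subdegree (T j) mod subdegree x = subdegree (B j) mod subdegree x"
    if "j < n" "T j \<noteq> 0" for j
    using T_sub[OF that] by simp
  have bT: "b = (\<Sum>j<n. T j)" using bg unfolding T_def .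
  obtain J where J: "J < n" "T J \<noteq> 0" "subdegree (\<Sum>j<n. T j) = subdegree (T J)"
  proof (rule subdegree_sum_distinct[of n T])
    show "i = j" if "i < n" "j < n" "T i \<noteq> 0" "T j \<noteq> 0" "subdegree (T i) = subdegree (T j)"
      for i j
      using incongruent[OF that(1,2)] that(5) T_mod[OF that(1,3)] T_mod[OF that(2,4)] by simp
    show "(\<Sum>j<n. T j) \<noteq> 0" using b(2) unfolding bT .
  qed
  show thesis
  proof (rule that)
    show "J < n" by (rule J(1))
    show "g J \<noteq> 0" using T_sub[OF J(1,2)] by blast
    show "(g J oo x) * B J \<in> M" unfolding span by (rule kx_comb_single[OF J(1)])
    show "subdegree b = subdegree x * subdegree (g J) + subdegree (B J)"
      using T_sub[OF J(1,2)] J(3) unfolding bT by simp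
  qed
qed

section \<open>Powers of the maximal ideal\<close>

lemma addclose_mono: "A \<subseteq> B \<Longrightarrow> addclose A \<subseteq> addclose B"
proof
  fix a assume AB: "A \<subseteq> B" and "a \<in> addclose A"
  from \<open>a \<in> addclose A\<close> show "a \<in> addclose B"
    by (induction rule: addclose.induct) (use AB in \<open>auto intro: addclose.intros\<close>)
qed

lemma addclose_dvd:
  fixes d :: "'a::field fps"
  assumes "\<And>a. a \<in> A \<Longrightarrow> d dvd a" and "a \<in> addclose A"
  shows "d dvd a"
  using assms(2) by (induction rule: addclose.induct) (auto intro: assms(1))

lemma mpow_Suc_subset:
  assumes "subring_containing_k R"
  shows "mpow R (Suc n) \<subseteq> mpow R n"
proof (induction n)
  case 0
  have "addclose {a * b |a b. a \<in> R \<and> b \<in> maxid R} \<subseteq> R"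
  proof
    fix c assume "c \<in> addclose {a * b |a b. a \<in> R \<and> b \<in> maxid R}"
    then show "c \<in> R"
      using assms unfolding subring_containing_k_def maxid_def
      by (induction rule: addclose.induct) (auto simp flip: fps_const_0_eq_0)
  qed
  then show ?case by simp
next
  case (Suc n)
  then show ?case by (auto intro!: addclose_mono)
qed

lemma mpow_antimono:
  assumes "subring_containing_k R" "m \<le> n"
  shows "mpow R n \<subseteq> mpow R m"
  using lift_Suc_antimono_le[of "mpow R", OF mpow_Suc_subset[OF assms(1)] assms(2)] .

lemma mpow_dvd: "a \<in> mpow R i \<Longrightarrow> fps_X ^ i dvd a"
proof (induction i arbitrary: a)
  case (Suc i)
  have factor_dvd: "fps_X ^ Suc i dvd a * b" if "a \<in> mpow R i" "b \<in> maxid R" for a b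
  proof -
    have "fps_nth b 0 = 0" using that(2) unfolding maxid_def by blast
    have "fps_X dvd b"
    proof (cases "b = 0")
      case False
      then have "subdegree b \<noteq> 0" using \<open>fps_nth b 0 = 0\<close> by (simp add: subdegree_eq_0_iff)
      then show ?thesis using False by (simp add: fps_dvd_iff)
    qed simp
    then have "fps_X ^ i * fps_X dvd a * b" by (rule mult_dvd_mono[OF Suc.IH[OF that(1)]])
    then show ?thesis by (simp add: mult.commute)
  qed
  from Suc.prems have "a \<in> addclose {a * b |a b. a \<in> mpow R i \<and> b \<in> maxid R}" by simp
  then show ?case by (rule addclose_dvd[rotated]) (use factor_dvd in blast)
qed simp

lemma mpow_subdegree: "a \<in> mpow R i \<Longrightarrow> a \<noteq> 0 \<Longrightarrow> i \<le> subdegree a"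
  using mpow_dvd[of a R i] fps_dvd_iff[of "fps_X ^ i" a] by simp

text \<open>For u in S the maximum vord(u) exists (valuations bound the level of m^i) and it
  is the last level i with u in v(m^i).\<close>
lemma vord_attained:
  assumes "u \<in> vset R"
  shows "u \<in> vset (mpow R (vord R u))" and "u \<notin> vset (mpow R (Suc (vord R u)))"
proof -
  define P where "P = (\<lambda>i. u \<in> vset (mpow R i))"
  have P0: "P 0" using assms unfolding P_def by simp
  have bound: "i \<le> u" if "P i" for i
    using that mpow_subdegree unfolding P_def vset_def by blast
  have vord: "vord R u = Greatest P" unfolding vord_def P_def ..
  have "P (Greatest P)" by (rule GreatestI_nat[of P 0 u, OF P0 bound])
  then show "u \<in> vset (mpow R (vord R u))" unfolding vord P_def .
  have "\<not> P (Suc (Greatest P))"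
    using Greatest_le_nat[of P _ u, OF _ bound] by fastforce
  then show "u \<notin> vset (mpow R (Suc (vord R u)))" unfolding vord P_def .
qed

lemma ord_m_eqI:
  assumes "subring_containing_k R" "a \<in> mpow R i" "a \<notin> mpow R (Suc i)"
  shows "ord_m R a = i"
  unfolding ord_m_def
proof (rule Greatest_equality)
  show "y \<le> i" if "a \<in> mpow R y" for y
    using that assms(3) mpow_antimono[OF assms(1), of "Suc i" y] by (cases "Suc i \<le> y") auto
qed (rule assms(2))

section \<open>The value semigroup\<close>

lemma semigroup_S_tail:
  assumes "subring_containing_k R" "conductor R \<noteq> {0}"
  obtains c where "\<And>n. c \<le> n \<Longrightarrow> n \<in> semigroup_S R"
proof -
  have "0 \<in> R" using assms(1) unfolding subring_containing_k_def by (metis fps_const_0_eq_0)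
  then have "0 \<in> conductor R" unfolding conductor_def by simp
  then obtain z where z: "z \<in> conductor R" "z \<noteq> 0" using assms(2) by blast
  have "n \<in> semigroup_S R" if "subdegree z \<le> n" for n
  proof -
    define a where "a = z * fps_X ^ (n - subdegree z)"
    have "a \<in> R" using z(1) unfolding conductor_def a_def by blast
    moreover have "a \<noteq> 0" "subdegree a = n" using z(2) that unfolding a_def by simp_all
    ultimately show ?thesis unfolding semigroup_S_def vset_def by blast
  qed
  then show thesis by (rule that)
qed

lemma mult_e_pos:
  assumes "subring_containing_k R" "conductor R \<noteq> {0}"
  shows "0 < mult_e R"
proof -
  obtain c where c: "\<And>n. c \<le> n \<Longrightarrow> n \<in> semigroup_S R" using semigroup_S_tail[OF assms] by blast
  have "Suc c \<in> semigroup_S R \<and> 0 < Suc c" using c by simp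
  then show ?thesis unfolding mult_e_def by (rule LeastI2) simp
qed

lemma apery_w_mod:
  assumes "subring_containing_k R" "conductor R \<noteq> {0}" "j < mult_e R"
  shows "apery_w R j mod mult_e R = j"
proof -
  obtain c where c: "\<And>n. c \<le> n \<Longrightarrow> n \<in> semigroup_S R" using semigroup_S_tail[OF assms(1,2)] by blast
  have "c \<le> c * mult_e R + j" using mult_e_pos[OF assms(1,2)] by (cases "mult_e R") simp_all
  then have "c * mult_e R + j \<in> semigroup_S R" by (rule c)
  moreover have "(c * mult_e R + j) mod mult_e R = j" using assms(3) by simp
  ultimately have "\<exists>s. s \<in> semigroup_S R \<and> s mod mult_e R = j" by blast
  then show ?thesis unfolding apery_w_def by (rule LeastI2_ex) simp
qed

lemma apery_w_le:
  assumes "s \<in> semigroup_S R" "s mod mult_e R = j"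
  shows "apery_w R j \<le> s"
  unfolding apery_w_def by (rule Least_le) (simp add: assms)

section \<open>The BF condition\<close>

locale BF_data =
  fixes R :: "'a::field fps set" and x :: "'a fps"
    and f :: "nat \<Rightarrow> 'a fps" and H :: "nat \<Rightarrow> nat \<Rightarrow> nat"
  assumes subring: "subring_containing_k R"
    and conductor_nz: "conductor R \<noteq> {0}"
    and x_in: "x \<in> R" and x_nz: "x \<noteq> 0" and subdegree_x: "subdegree x = mult_e R"
    and f: "\<And>j. j < mult_e R \<Longrightarrow> f j \<in> R \<and> f j \<noteq> 0 \<and> subdegree (f j) = apery_w R j"
    and basis: "\<And>i. free_kx_basis x (mult_e R) (mpow R i) (\<lambda>j. x ^ H i j * f j)"
begin

abbreviation e :: nat where "e \<equiv> mult_e R"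
abbreviation w :: "nat \<Rightarrow> nat" where "w \<equiv> apery_w R"

lemma e_pos: "0 < e"
  using mult_e_pos[OF subring conductor_nz] .

lemma x0: "fps_nth x 0 = 0"
  using e_pos subdegree_x by (intro nth_less_subdegree_zero) simp

lemma mpow_span: "mpow R i = {kx_comb x e (\<lambda>j. x ^ H i j * f j) g | g. True}"
  using basis unfolding free_kx_basis_def by blast

text \<open>The generators x^h f_j have valuation e h + w_j, hence lie in the residue class j.\<close>
lemma generator_subdegree:
  assumes "j < e"
  shows "x ^ h * f j \<noteq> 0" "subdegree (x ^ h * f j) = e * h + w j"
  using f[OF assms] x_nz subdegree_x by simp_all

lemma mpow_leading_term:
  assumes "b \<in> mpow R i" "b \<noteq> 0"
  obtains J q where "J < e" "q \<noteq> 0" "(q oo x) * (x ^ H i J * f J) \<in> mpow R i"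
    "subdegree b = e * (subdegree q + H i J) + w J"
proof -
  have residue: "subdegree (x ^ H i j * f j) mod subdegree x = j" if "j < e" for j
    using generator_subdegree(2)[OF that] apery_w_mod[OF subring conductor_nz that] subdegree_x
    by simp
  obtain J q where J: "J < e" "q \<noteq> 0" "(q oo x) * (x ^ H i J * f J) \<in> mpow R i"
    and b: "subdegree b = subdegree x * subdegree q + subdegree (x ^ H i J * f J)"
  proof (rule kx_span_leading_term[OF mpow_span x0 x_nz _ _ assms])
    show "x ^ H i j * f j \<noteq> 0" if "j < e" for j using generator_subdegree(1)[OF that] .
    show "j = j'" if "j < e" "j' < e" "subdegree (x ^ H i j * f j) mod subdegree x =
        subdegree (x ^ H i j' * f j') mod subdegree x" for j j'
    proof -
      have "j = subdegree (x ^ H i j * f j) mod subdegree x" using residue[OF that(1)] by (rule sym)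
      also have "\<dots> = j'" using that(3) residue[OF that(2)] by (rule trans)
      finally show ?thesis .
    qed
  qed
  moreover have "subdegree b = e * (subdegree q + H i J) + w J"
    using b generator_subdegree(2)[OF J(1)] subdegree_x by (simp add: algebra_simps)
  ultimately show thesis using that by blast
qed

lemma H_zero:
  assumes "J < e"
  shows "H 0 J = 0"
proof -
  have fJ: "f J \<in> mpow R 0" "f J \<noteq> 0" "subdegree (f J) = w J" using f[OF assms] by simp_all
  obtain J' and q :: "'a fps" where J': "J' < e" "subdegree (f J) = e * (subdegree q + H 0 J') + w J'"
    using mpow_leading_term[OF fJ(1,2)] by blast
  then have wJ: "w J = e * (subdegree q + H 0 J') + w J'" using fJ(3) by simp
  have "J = w J mod e" using apery_w_mod[OF subring conductor_nz assms] by simp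
  also have "\<dots> = w J' mod e" unfolding wJ by simp
  also have "\<dots> = J'" using apery_w_mod[OF subring conductor_nz J'(1)] .
  finally show ?thesis using wJ e_pos by simp
qed

lemma kx_multiple_in_R:
  assumes "J < e"
  shows "(q oo x) * f J \<in> R"
  using kx_comb_single[OF assms, of q x "\<lambda>j. x ^ H 0 j * f j"] H_zero[OF assms]
  unfolding mpow_span[of 0, symmetric] by simp

lemma ess_div_wrt_x: "ess_div_wrt R x"
  unfolding ess_div_wrt_def
proof
  fix u assume "u \<in> vset (principal R x)"
  then obtain r where r: "r \<in> R" "x * r \<noteq> 0" "u = subdegree (x * r)"
    unfolding vset_def principal_def by blast
  have "x * r \<in> R" using subring x_in r(1) unfolding subring_containing_k_def by blast
  then have "u \<in> vset R" using r unfolding vset_def by blast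
  have u_r: "u = e + subdegree r" and r_nz: "r \<noteq> 0" using r subdegree_x by auto
  define i where "i = vord R u"
  obtain b where b: "b \<in> mpow R i" "b \<noteq> 0" "subdegree b = u"
    using vord_attained(1)[OF \<open>u \<in> vset R\<close>] unfolding i_def vset_def by blast
  obtain J q where J: "J < e" "q \<noteq> 0" and a_mpow: "(q oo x) * (x ^ H i J * f J) \<in> mpow R i"
    and u_J: "u = e * (subdegree q + H i J) + w J"
    using mpow_leading_term[OF b(1,2)] unfolding b(3) by blast
  define a where "a = (q oo x) * (x ^ H i J * f J)"
  have a: "a \<noteq> 0" "subdegree a = u"
    using subdegree_compose_mult[OF x0 x_nz J(2) generator_subdegree(1)[OF J(1)]]
      generator_subdegree(2)[OF J(1)] subdegree_x u_J
    unfolding a_def by (simp_all add: algebra_simps)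
  txt \<open>u - e = v(r) lies in S and in the class of J, so it is at least w_J; hence a has
    positive order in x and is divisible by x inside R.\<close>
  have "subdegree r mod e = u mod e" unfolding u_r by simp
  also have "\<dots> = w J mod e" unfolding u_J by simp
  also have "\<dots> = J" by (rule apery_w_mod[OF subring conductor_nz J(1)])
  finally have "subdegree r mod e = J" .
  then have "w J \<le> subdegree r"
    using r(1) r_nz by (intro apery_w_le) (auto simp: semigroup_S_def vset_def)
  then have pos: "0 < subdegree q + H i J" using u_J u_r e_pos by (cases "subdegree q + H i J") auto
  have "a = x * ((fps_shift 1 (q * fps_X ^ H i J) oo x) * f J)"
    unfolding a_def using compose_times_power_factor[OF x0 J(2) pos] by (simp add: ac_simps)
  then have "a \<in> principal R x"
    using kx_multiple_in_R[OF J(1)] unfolding principal_def by blast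
  moreover have "ord_m R a = vord R u"
  proof -
    have "a \<notin> mpow R (Suc i)"
      using vord_attained(2)[OF \<open>u \<in> vset R\<close>] a unfolding i_def vset_def by blast
    then show ?thesis
      using ord_m_eqI[OF subring a_mpow[folded a_def]] unfolding i_def by simp
  qed
  ultimately show "\<exists>a\<in>principal R x. a \<noteq> 0 \<and> subdegree a = u \<and> ord_m R a = vord R u"
    using a by blast
qed

end

theorem proposition1p4:
  fixes R :: "'a::field fps set"
  assumes "subring_containing_k R"
    and "local_with_maxid R"
    and "madic_complete R"
    and "conductor R \<noteq> {0}"
    and "BF_condition R"
  shows "ess_div R"
proof -
  obtain x f where x: "x \<in> R" "x \<noteq> 0" "subdegree x = mult_e R"
    and f: "\<And>j. j < mult_e R \<Longrightarrow> f j \<in> R \<and> f j \<noteq> 0 \<and> subdegree (f j) = apery_w R j"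
    and bases: "\<forall>i. \<exists>h. free_kx_basis x (mult_e R) (mpow R i) (\<lambda>j. x ^ h j * f j)"
    using assms(5) unfolding BF_condition_def by blast
  from bases obtain H where "\<And>i. free_kx_basis x (mult_e R) (mpow R i) (\<lambda>j. x ^ H i j * f j)"
    by metis
  then interpret BF_data R x f H
    using assms(1,4) x f by unfold_locales auto
  show ?thesis
    unfolding ess_div_def using x ess_div_wrt_x by blast
qed

end
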